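(* Let $A\in\mathcal{L}_{PL}'$. If $A$ is $PL$-satisfiable, then $A$ is satisfied by a $PL$-model $M=\langle W,H,\mu,v\rangle$ such that: (1) $|W|\le |A|$; (2) $H=\mathcal{P}(W)$; (3) for every $w\in W$, $\mu(\{w\})$ is a non-negative rational number of size at most $2\cdot\big(|A|\cdot\|A\| + |A|\cdot\log_2(|A|)+1\big)$; (4) for every $a\in\mathrm{cpnb}(A)$ there is at most one $w\in W$ with $v_w(a)=\mathrm{T}$.
   Context: Fix a logic $L$ extending classical propositional logic, given by a set $B(L)$ of basic formulas containing a countable set $\mathrm{Prop}$ of atomic propositions, the language $\mathcal{L}$ generated by $\alpha::=b\mid\neg\alpha\mid\alpha\wedge\alpha$ ($b\in B(L)$), and a class of admissible evaluations $v:B(L)\to\{\mathrm{T},\mathrm{F}\}$, each extended to all of $\mathcal{L}$ by the classical truth tables. The language $\mathcal{L}_{PL}'$ is generated by $A::=P_{\ge s}\alpha\mid\neg A\mid A\wedge A$ with $s\in\mathbb{Q}\cap[0,1]$ and $\alpha\in\mathcal{L}$ (no nesting of $P$); $\mathcal{L}_{PL}=\mathcal{L}_{PL}'\cup\mathcal{L}$. A $PL$-model is $M=\langle W,H,\mu,v\rangle$ where $\langle W,H,\mu\rangle$ is a probability space, $v$ assigns to each $w\in W$ an admissible evaluation $v_w$, and $[\alpha]_M=\{w\in W: v_w(\alpha)=\mathrm{T}\}\in H$ for all $\alpha\in\mathcal{L}$. Truth: $M\models P_{\ge s}\alpha$ iff $\mu([\alpha]_M)\ge s$; $\neg,\wedge$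 classically; for $\alpha\in\mathcal{L}$, $M\models\alpha$ iff $[\alpha]_M=W$. $|A|$ is the number of symbols of $A$, each operator $P_{\ge s}$ counting as one symbol; $\|A\|=\max\{|s|: P_{\ge s}\alpha \text{ is a subformula of } A\}$, where the size of a rational $s=s_1/s_2$ in lowest terms is the number of binary digits of $s_1$ plus that of $s_2$. $\mathrm{cpnb}(A)$ is the set of all conjunctions $\bigwedge_{B}\pm B$, where $B$ ranges over the basic formulas (elements of $B(L)$) that are subformulas of $A$, and $\pm B$ is either $B$ or $\neg B$. *)

theory Defs
  imports "HOL-Probability.Probability"
begin

datatype 'b fml = Basic 'b | Neg "'b fml" | Conj "'b fml" "'b fml"

primrec eval :: "('b \<Rightarrow> bool) \<Rightarrow> 'b fml \<Rightarrow> bool" where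
  "eval v (Basic b) = v b"
| "eval v (Neg a) = (\<not> eval v a)"
| "eval v (Conj a c) = (eval v a \<and> eval v c)"

text \<open>Formulas of L_PL' : P_{>=s} alpha, negation, conjunction (no nesting of P).\<close>

datatype 'b pfml = Pge rat "'b fml" | PNeg "'b pfml" | PConj "'b pfml" "'b pfml"

primrec wf_pfml :: "'b pfml \<Rightarrow> bool" where
  "wf_pfml (Pge s a) = (0 \<le> s \<and> s \<le> 1)"
| "wf_pfml (PNeg A) = wf_pfml A"
| "wf_pfml (PConj A B) = (wf_pfml A \<and> wf_pfml B)"

primrec fsize :: "'b fml \<Rightarrow> nat" where
  "fsize (Basic b) = 1"
| "fsize (Neg a) = 1 + fsize a"
| "fsize (Conj a c) = 1 + fsize a + fsize c"

primrec psize :: "'b pfml \<Rightarrow> nat" where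
  "psize (Pge s a) = 1 + fsize a"
| "psize (PNeg A) = 1 + psize A"
| "psize (PConj A B) = 1 + psize A + psize B"

text \<open>Number of binary digits of a natural number (0 is written with one digit).\<close>
fun bitlen :: "nat \<Rightarrow> nat" where
  "bitlen n = (if n < 2 then 1 else 1 + bitlen (n div 2))"

definition ratsize :: "rat \<Rightarrow> nat" where
  "ratsize r = (case quotient_of r of (a, b) \<Rightarrow> bitlen (nat \<bar>a\<bar>) + bitlen (nat b))"

primrec thresholds :: "'b pfml \<Rightarrow> rat set" where
  "thresholds (Pge s a) = {s}"
| "thresholds (PNeg A) = thresholds A"
| "thresholds (PConj A B) = thresholds A \<union> thresholds B"

definition maxratsize :: "'b pfml \<Rightarrow> nat" where
  "maxratsize A = Max (ratsize ` thresholds A)"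

primrec fbasics :: "'b fml \<Rightarrow> 'b set" where
  "fbasics (Basic b) = {b}"
| "fbasics (Neg a) = fbasics a"
| "fbasics (Conj a c) = fbasics a \<union> fbasics c"

primrec pbasics :: "'b pfml \<Rightarrow> 'b set" where
  "pbasics (Pge s a) = fbasics a"
| "pbasics (PNeg A) = pbasics A"
| "pbasics (PConj A B) = pbasics A \<union> pbasics B"

fun conjs :: "'b fml list \<Rightarrow> 'b fml" where
  "conjs [x] = x"
| "conjs (x # y # xs) = Conj x (conjs (y # xs))"
| "conjs [] = undefined"

definition cpnb :: "'b pfml \<Rightarrow> 'b fml set" where
  "cpnb A = {conjs (map (\<lambda>B. if f B then Basic B else Neg (Basic B)) xs) | f xs.
               distinct xs \<and> set xs = pbasics A}"

text \<open>A PL-model over the admissible evaluations Adm: a probability space M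
  (W = space M, H = sets M, mu = measure M) with v w admissible for every world,
  and every [alpha] measurable.\<close>
definition ext :: "'w measure \<Rightarrow> ('w \<Rightarrow> 'b \<Rightarrow> bool) \<Rightarrow> 'b fml \<Rightarrow> 'w set" where
  "ext M v a = {w \<in> space M. eval (v w) a}"

definition PL_model :: "('b \<Rightarrow> bool) set \<Rightarrow> 'w measure \<Rightarrow> ('w \<Rightarrow> 'b \<Rightarrow> bool) \<Rightarrow> bool" where
  "PL_model Adm M v \<longleftrightarrow> prob_space M \<and> (\<forall>w\<in>space M. v w \<in> Adm)
      \<and> (\<forall>a. ext M v a \<in> sets M)"

primrec psat :: "'w measure \<Rightarrow> ('w \<Rightarrow> 'b \<Rightarrow> bool) \<Rightarrow> 'b pfml \<Rightarrow> bool" where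
  "psat M v (Pge s a) = (measure M (ext M v a) \<ge> real_of_rat s)"
| "psat M v (PNeg A) = (\<not> psat M v A)"
| "psat M v (PConj A B) = (psat M v A \<and> psat M v B)"

end

theory Submission
  imports Defs "Jordan_Normal_Form.Determinant"
begin

(* Only the probabilities of the finitely many complete conjunctions over the basic
  subformulas of A matter, and each of them is realised by a world. The truth of A is a
  Boolean combination of threshold conditions, linear in these probabilities; a slack
  variable turns the failing conditions into non-strict ones. A feasible point of the
  resulting linear system with a maximal set of tight constraints is the unique solution
  of a square subsystem with integer entries of absolute value at most 2^||A||, of
  dimension at most |A|. So it has at most |A| nonzero entries, and Cramer's rule gives
  a common denominator D <= m! 2^(m ||A||), whence the bound on the sizes. *)

section \<open>Binary length of numbers\<close>

declare bitlen.simps[simp del]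

lemma bitlen_less_2: "n < 2 \<Longrightarrow> bitlen n = 1"
  by (subst bitlen.simps) simp

lemma bitlen_ge_2: "\<not> n < 2 \<Longrightarrow> bitlen n = Suc (bitlen (n div 2))"
  by (subst bitlen.simps) simp

lemma bitlen_pos: "1 \<le> bitlen n"
  by (cases "n < 2") (auto simp: bitlen_less_2 bitlen_ge_2)

lemma bitlen_mono: "m \<le> n \<Longrightarrow> bitlen m \<le> bitlen n"
proof (induction n arbitrary: m rule: less_induct)
  case (less n)
  show ?case
  proof (cases "m < 2")
    case True
    then show ?thesis using bitlen_pos[of n] by (simp add: bitlen_less_2)
  next
    case False
    with less.prems have "\<not> n < 2" by simp
    moreover have "bitlen (m div 2) \<le> bitlen (n div 2)"
      using less \<open>\<not> n < 2\<close> by (simp add: div_le_mono)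
    ultimately show ?thesis using False by (simp add: bitlen_ge_2)
  qed
qed

lemma less_two_power_bitlen: "n < 2 ^ bitlen n"
proof (induction n rule: less_induct)
  case (less n)
  show ?case
  proof (cases "n < 2")
    case True
    then show ?thesis by (simp add: bitlen_less_2)
  next
    case False
    then have "n div 2 < 2 ^ bitlen (n div 2)" using less by simp
    then show ?thesis using False by (simp add: bitlen_ge_2)
  qed
qed

lemma two_power_bitlen_le: "1 \<le> n \<Longrightarrow> 2 ^ (bitlen n - 1) \<le> n"
proof (induction n rule: less_induct)
  case (less n)
  show ?case
  proof (cases "n < 2")
    case True
    then show ?thesis using less by (simp add: bitlen_less_2)
  next
    case False
    then have "2 ^ (bitlen (n div 2) - 1) \<le> n div 2" using less by simp
    moreover have "bitlen n - 1 = Suc (bitlen (n div 2) - 1)"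
      using False bitlen_pos[of "n div 2"] by (simp add: bitlen_ge_2)
    ultimately show ?thesis by simp
  qed
qed

lemma bitlen_le_log: "1 \<le> n \<Longrightarrow> real (bitlen n) \<le> log 2 (real n) + 1"
proof -
  assume n: "1 \<le> n"
  have "(2::real) powr real (bitlen n - 1) \<le> real n"
    using two_power_bitlen_le[OF n] by (simp add: powr_realpow flip: of_nat_power)
  then have "real (bitlen n - 1) \<le> log 2 (real n)"
    using n by (subst le_log_iff) auto
  then show ?thesis using bitlen_pos[of n] by linarith
qed

lemma bitlen_le_of_le_fact_power:
  fixes D :: int and m N L :: nat
  assumes D: "0 < D" "real_of_int D \<le> fact m * (2 ^ L) ^ m" and m: "1 \<le> m" "m \<le> N"
  shows "real (bitlen (nat D)) \<le> real N * real L + real N * log 2 (real N) + 1"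
proof -
  have "real (bitlen (nat D)) \<le> log 2 (real_of_int D) + 1"
    using bitlen_le_log[of "nat D"] D(1) by simp
  also have "log 2 (real_of_int D) \<le> log 2 (fact m * (2 ^ L) ^ m)"
    using D by (intro log_le_cancel_iff[THEN iffD2]) auto
  also have "\<dots> = log 2 (fact m) + real m * real L"
  proof -
    have "log 2 (((2::real) ^ L) ^ m) = real m * real L"
      by (simp add: log_nat_power power_mult[symmetric] mult.commute)
    then show ?thesis by (simp add: log_mult_pos)
  qed
  also have "log 2 (fact m) \<le> log 2 (real m ^ m)"
    using fact_le_power[of m] m by (intro log_le_cancel_iff[THEN iffD2]) auto
  also have "\<dots> = real m * log 2 (real m)"
    using m by (simp add: log_nat_power)
  also have "\<dots> \<le> real N * log 2 (real N)"
  proof (rule mult_mono)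
    show "log 2 (real m) \<le> log 2 (real N)"
      using m by (intro log_le_cancel_iff[THEN iffD2]) auto
  qed (use m in auto)
  finally show ?thesis
    using mult_right_mono[of "real m" "real N" "real L"] m by simp
qed

lemma ratsize_fraction_le:
  fixes N D :: int
  assumes D: "0 < D" and N: "0 \<le> N" "N \<le> D"
  shows "ratsize (of_int N / of_int D) \<le> 2 * bitlen (nat D)"
proof -
  define q :: rat where "q = of_int N / of_int D"
  obtain a b where ab: "quotient_of q = (a, b)" by fastforce
  have b: "0 < b" "q = of_int a / of_int b" "coprime a b"
    using quotient_of_denom_pos[OF ab] quotient_of_div[OF ab] quotient_of_coprime[OF ab] .
  then have "of_int a * of_int D = (of_int N * of_int b :: rat)"
    using D unfolding q_def by (simp add: field_simps)
  then have "a * D = N * b" by (metis of_int_eq_iff of_int_mult)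
  then have "b dvd D"
    using b(3) by (metis coprime_commute coprime_dvd_mult_right_iff dvd_triv_right)
  then have "b \<le> D" using D by (simp add: zdvd_imp_le)
  have "0 \<le> q" "q \<le> 1" using N D unfolding q_def by auto
  then have "0 \<le> a" "a \<le> b"
    using b by (auto simp: zero_le_divide_iff divide_le_eq_1)
  have "ratsize q = bitlen (nat a) + bitlen (nat b)"
    unfolding ratsize_def using ab \<open>0 \<le> a\<close> by simp
  also have "\<dots> \<le> bitlen (nat D) + bitlen (nat D)"
    using \<open>a \<le> b\<close> \<open>b \<le> D\<close> by (intro add_mono bitlen_mono) auto
  finally show ?thesis unfolding q_def by simp
qed

lemma denominator_less_two_power_ratsize: "real_of_int (snd (quotient_of q)) < 2 ^ ratsize q"
proof -
  obtain a b where ab: "quotient_of q = (a, b)" by fastforce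
  have "nat b < 2 ^ bitlen (nat b)" by (rule less_two_power_bitlen)
  also have "\<dots> \<le> 2 ^ ratsize q"
    unfolding ratsize_def ab by (intro power_increasing) auto
  finally have "real (nat b) < 2 ^ ratsize q"
    by (metis of_nat_less_numeral_power_cancel_iff)
  then show ?thesis using quotient_of_denom_pos[OF ab] ab by simp
qed

lemma denominator_mult_of_rat:
  "real_of_int (snd (quotient_of q)) * real_of_rat q = real_of_int (fst (quotient_of q))"
proof -
  obtain a b where ab: "quotient_of q = (a, b)" by fastforce
  then show ?thesis
    using quotient_of_div[OF ab] quotient_of_denom_pos[OF ab] by (simp add: of_rat_divide)
qed

lemma ratsize_of_common_denominator:
  fixes y :: real and D :: int
  assumes y: "0 \<le> y" "y \<le> 1" "y * of_int D \<in> \<int>"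
    and D: "0 < D" "real_of_int D \<le> fact m * (2 ^ L) ^ m" and m: "1 \<le> m" "m \<le> N"
  shows "\<exists>q. y = real_of_rat q \<and> 0 \<le> q
           \<and> real (ratsize q) \<le> 2 * (real N * real L + real N * log 2 (real N) + 1)"
proof -
  obtain k where k: "y * of_int D = of_int k" using y(3) by (auto elim: Ints_cases)
  have "0 \<le> y * of_int D" "y * of_int D \<le> of_int D"
    using y D(1) by (auto intro: mult_left_le_one_le)
  then have "0 \<le> k" "k \<le> D" using k by auto
  define q where "q = (of_int k / of_int D :: rat)"
  have "y = real_of_rat q" using k D(1) by (simp add: q_def of_rat_divide field_simps)
  moreover have "0 \<le> q" using \<open>0 \<le> k\<close> D(1) by (simp add: q_def)
  moreover have "ratsize q \<le> 2 * bitlen (nat D)"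
    unfolding q_def using ratsize_fraction_le D(1) \<open>0 \<le> k\<close> \<open>k \<le> D\<close> by blast
  ultimately show ?thesis
    using bitlen_le_of_le_fact_power[OF D m] by (intro exI[of _ q]) auto
qed

section \<open>Integer linear systems with a unique solution\<close>

lemma det_in_Ints:
  fixes A :: "real mat"
  assumes A: "A \<in> carrier_mat n n" and I: "\<And>i j. i < n \<Longrightarrow> j < n \<Longrightarrow> A $$ (i,j) \<in> \<int>"
  shows "det A \<in> \<int>"
proof -
  have "(\<Prod>i = 0..<n. A $$ (i, p i)) \<in> \<int>" if p: "p permutes {0..<n}" for p
    using I permutes_in_image[OF p] by (intro Ints_prod) auto
  then have "(\<Sum>p | p permutes {0..<n}. of_int (sign p) * (\<Prod>i = 0..<n. A $$ (i, p i))) \<in> \<int>"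
    by (intro Ints_sum Ints_mult) auto
  then show ?thesis using A unfolding det_def by auto
qed

lemma abs_det_le:
  fixes A :: "real mat"
  assumes A: "A \<in> carrier_mat n n" and B: "\<And>i j. i < n \<Longrightarrow> j < n \<Longrightarrow> \<bar>A $$ (i,j)\<bar> \<le> W"
  shows "\<bar>det A\<bar> \<le> fact n * W ^ n"
proof -
  let ?P = "{p. p permutes {0..<n}}"
  have "\<bar>det A\<bar> = \<bar>\<Sum>p\<in>?P. of_int (sign p) * (\<Prod>i = 0..<n. A $$ (i, p i))\<bar>"
    using A unfolding det_def by auto
  also have "\<dots> \<le> (\<Sum>p\<in>?P. \<bar>of_int (sign p) * (\<Prod>i = 0..<n. A $$ (i, p i))\<bar>)"
    by (rule sum_abs)
  also have "\<dots> \<le> (\<Sum>p\<in>?P. W ^ n)"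
  proof (rule sum_mono)
    fix p assume "p \<in> ?P"
    then have p: "p permutes {0..<n}" by simp
    have "\<bar>of_int (sign p) * (\<Prod>i = 0..<n. A $$ (i, p i))\<bar> = (\<Prod>i = 0..<n. \<bar>A $$ (i, p i)\<bar>)"
      by (simp add: abs_mult abs_prod sign_def)
    also have "\<dots> \<le> (\<Prod>i = 0..<n. W)"
      using B permutes_in_image[OF p] by (intro prod_mono) auto
    finally show "\<bar>of_int (sign p) * (\<Prod>i = 0..<n. A $$ (i, p i))\<bar> \<le> W ^ n" by simp
  qed
  also have "\<dots> = fact n * W ^ n"
    using card_permutations[of "{0..<n}" n] by simp
  finally show ?thesis .
qed

lemma det_zero_row:
  fixes A :: "'a::comm_ring_1 mat"
  assumes A: "A \<in> carrier_mat n n" and k: "k < n" and Z: "\<And>j. j < n \<Longrightarrow> A $$ (k,j) = 0"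
  shows "det A = 0"
proof -
  have "(\<Prod>i = 0..<n. A $$ (i, p i)) = 0" if p: "p permutes {0..<n}" for p
    using k Z permutes_in_image[OF p] by (intro prod_zero bexI[of _ k]) auto
  then show ?thesis using A unfolding det_def by auto
qed

lemma kernel_vector_of_few_rows:
  fixes ws :: "'a::field vec list"
  assumes ws: "set ws \<subseteq> carrier_vec m" and few: "length ws < m"
  obtains v where "v \<in> carrier_vec m" "v \<noteq> 0\<^sub>v m" "\<And>r. r \<in> set ws \<Longrightarrow> r \<bullet> v = 0"
proof -
  define M where "M = mat m m (\<lambda>(i,j). if i < length ws then ws ! i $ j else 0)"
  have M: "M \<in> carrier_mat m m" unfolding M_def by simp
  have "det M = 0"
    using M few by (intro det_zero_row[of M m "length ws"]) (auto simp: M_def)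
  then obtain v where v: "v \<in> carrier_vec m" "v \<noteq> 0\<^sub>v m" "M *\<^sub>v v = 0\<^sub>v m"
    using det_0_iff_vec_prod_zero_field[OF M] by blast
  have "r \<bullet> v = 0" if "r \<in> set ws" for r
  proof -
    obtain i where i: "i < length ws" "r = ws ! i" using \<open>r \<in> set ws\<close> by (metis in_set_conv_nth)
    have "i < m" using i few by simp
    have "ws ! i \<in> carrier_vec m" using ws nth_mem[OF i(1)] by blast
    then have "row M i = ws ! i"
      unfolding M_def using i \<open>i < m\<close> by (intro eq_vecI) auto
    then have "(M *\<^sub>v v) $ i = r \<bullet> v" using M \<open>i < m\<close> i by simp
    then show ?thesis using v(3) i \<open>i < m\<close> by simp
  qed
  then show ?thesis using that v by blast
qed

lemma det_mat_of_rows_nonzero: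
  fixes ws :: "'a::field vec list"
  assumes ws: "set ws \<subseteq> carrier_vec m" "length ws = m"
    and ker: "\<And>v. v \<in> carrier_vec m \<Longrightarrow> (\<forall>r\<in>set ws. r \<bullet> v = 0) \<Longrightarrow> v = 0\<^sub>v m"
  shows "det (mat_of_rows m ws) \<noteq> 0"
proof
  define M where "M = mat_of_rows m ws"
  have M: "M \<in> carrier_mat m m" unfolding M_def using mat_of_rows_carrier(1)[of m ws] ws(2) by simp
  assume "det (mat_of_rows m ws) = 0"
  then obtain v where v: "v \<in> carrier_vec m" "v \<noteq> 0\<^sub>v m" "M *\<^sub>v v = 0\<^sub>v m"
    using det_0_iff_vec_prod_zero_field[OF M] M_def by blast
  have "r \<bullet> v = 0" if "r \<in> set ws" for r
  proof -
    obtain i where i: "i < m" "r = ws ! i" using \<open>r \<in> set ws\<close> ws(2) by (metis in_set_conv_nth)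
    have "(M *\<^sub>v v) $ i = row M i \<bullet> v" using M i by simp
    also have "row M i = ws ! i"
      unfolding M_def using i ws by (intro mat_of_rows_row) auto
    finally show ?thesis using v(3) i by simp
  qed
  then show False using ker[OF v(1)] v(2) by blast
qed

lemma exists_redundant_row:
  fixes ws :: "'a::field vec list"
  assumes ws: "set ws \<subseteq> carrier_vec m" "distinct ws" and many: "m < length ws"
  obtains r where "r \<in> set ws"
    "\<And>v. v \<in> carrier_vec m \<Longrightarrow> (\<forall>r'\<in>set ws - {r}. r' \<bullet> v = 0) \<Longrightarrow> r \<bullet> v = 0"
proof -
  define L where "L = length ws"
  define Q where "Q = mat L L (\<lambda>(i,j). if i < m then ws ! j $ i else 0)"
  have Q: "Q \<in> carrier_mat L L" unfolding Q_def by simp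
  have "det Q = 0" using Q many L_def by (intro det_zero_row[of Q L m]) (auto simp: Q_def)
  then obtain w where w: "w \<in> carrier_vec L" "w \<noteq> 0\<^sub>v L" "Q *\<^sub>v w = 0\<^sub>v L"
    using det_0_iff_vec_prod_zero_field[OF Q] by blast
  obtain k where k: "k < L" "w $ k \<noteq> 0"
    using w(1,2) by (metis eq_vecI carrier_vecD index_zero_vec(1,2))
  have comb: "(\<Sum>j<L. ws ! j $ i * w $ j) = 0" if i: "i < m" for i
  proof -
    have "(Q *\<^sub>v w) $ i = row Q i \<bullet> w" using Q i many L_def by simp
    also have "\<dots> = (\<Sum>j<L. ws ! j $ i * w $ j)"
      unfolding Q_def scalar_prod_def using w(1) i many L_def
      by (auto intro!: sum.cong simp: atLeast0LessThan)
    finally show ?thesis using w(3) i many L_def by simp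
  qed
  have "ws ! k \<bullet> v = 0"
    if v: "v \<in> carrier_vec m" and orth: "\<forall>r'\<in>set ws - {ws ! k}. r' \<bullet> v = 0" for v
  proof -
    have "(\<Sum>j<L. w $ j * (ws ! j \<bullet> v)) = (\<Sum>i<m. v $ i * (\<Sum>j<L. ws ! j $ i * w $ j))"
      using v ws(1) nth_mem[of _ ws] unfolding scalar_prod_def L_def
      by (simp add: sum_distrib_left atLeast0LessThan algebra_simps sum.swap[of _ "{..<m}"])
    also have "\<dots> = 0" using comb by simp
    also have "(\<Sum>j<L. w $ j * (ws ! j \<bullet> v)) = w $ k * (ws ! k \<bullet> v)"
    proof (rule sum.remove[THEN trans])
      have "ws ! j \<in> set ws - {ws ! k}" if "j < L" "j \<noteq> k" for j
        using that k ws(2) L_def nth_eq_iff_index_eq by fastforce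
      then show "w $ k * (ws ! k \<bullet> v) + (\<Sum>j\<in>{..<L} - {k}. w $ j * (ws ! j \<bullet> v))
          = w $ k * (ws ! k \<bullet> v)"
        using orth by (simp add: sum.neutral)
    qed (use k in auto)
    finally show ?thesis using k(2) by simp
  qed
  then show ?thesis using that[of "ws ! k"] k L_def nth_mem by blast
qed

lemma exists_nonsingular_rows:
  fixes R :: "'a::field vec set"
  assumes "finite R" "R \<subseteq> carrier_vec m"
    and "\<And>v. v \<in> carrier_vec m \<Longrightarrow> (\<forall>r\<in>R. r \<bullet> v = 0) \<Longrightarrow> v = 0\<^sub>v m"
  shows "\<exists>vs. set vs \<subseteq> R \<and> distinct vs \<and> length vs = m \<and> det (mat_of_rows m vs) \<noteq> 0"
  using assms
proof (induction "card R" arbitrary: R rule: less_induct)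
  case less
  obtain ws where ws: "distinct ws" "set ws = R" using finite_distinct_list[OF less(2)] by blast
  consider "length ws = m" | "length ws < m" | "m < length ws" by linarith
  then show ?case
  proof cases
    case 1
    then show ?thesis using ws less(3,4) det_mat_of_rows_nonzero[of ws m] by auto
  next
    case 2
    then show ?thesis
      using ws less(3,4) by (metis kernel_vector_of_few_rows)
  next
    case 3
    then obtain r where r: "r \<in> R"
      "\<And>v. v \<in> carrier_vec m \<Longrightarrow> (\<forall>r'\<in>R - {r}. r' \<bullet> v = 0) \<Longrightarrow> r \<bullet> v = 0"
      using exists_redundant_row[of ws m] ws less(3) by auto
    have "card (R - {r}) < card R" using r(1) less(2) by (intro card_Diff1_less)
    moreover have "v = 0\<^sub>v m" if "v \<in> carrier_vec m" "\<forall>r'\<in>R - {r}. r' \<bullet> v = 0" for v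
      using less(4) r(2) that by blast
    ultimately show ?thesis using less(1)[of "R - {r}"] less(2,3) by blast
  qed
qed

lemma dim_le_card_of_trivial_kernel:
  fixes R :: "'a::field vec set"
  assumes "finite R" "R \<subseteq> carrier_vec m"
    and "\<And>v. v \<in> carrier_vec m \<Longrightarrow> (\<forall>r\<in>R. r \<bullet> v = 0) \<Longrightarrow> v = 0\<^sub>v m"
  shows "m \<le> card R"
  using exists_nonsingular_rows[OF assms] card_mono[OF assms(1)] distinct_card by metis

text \<open>Cramer's rule: the determinant of a nonsingular square subsystem is a common denominator.\<close>

lemma common_denominator_of_unique_solution:
  fixes R :: "real vec set" and y :: "real vec"
  assumes fin: "finite R" and Rc: "R \<subseteq> carrier_vec m"
    and ker: "\<And>v. v \<in> carrier_vec m \<Longrightarrow> (\<forall>r\<in>R. r \<bullet> v = 0) \<Longrightarrow> v = 0\<^sub>v m"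
    and y: "y \<in> carrier_vec m" and ry: "\<And>r. r \<in> R \<Longrightarrow> r \<bullet> y \<in> \<int>"
    and ent: "\<And>r i. r \<in> R \<Longrightarrow> i < m \<Longrightarrow> r $ i \<in> \<int> \<and> \<bar>r $ i\<bar> \<le> W"
  obtains D :: int where "0 < D" "real_of_int D \<le> fact m * W ^ m" "\<And>k. k < m \<Longrightarrow> y $ k * of_int D \<in> \<int>"
proof -
  obtain vs where vs: "set vs \<subseteq> R" "length vs = m" "det (mat_of_rows m vs) \<noteq> 0"
    using exists_nonsingular_rows[OF fin Rc ker] by blast
  define M where "M = mat_of_rows m vs"
  have M: "M \<in> carrier_mat m m" unfolding M_def using mat_of_rows_carrier(1)[of m vs] vs(2) by simp
  have vsR: "vs ! i \<in> R" if "i < m" for i using vs that nth_mem by blast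
  have Mij: "M $$ (i,j) = vs ! i $ j" if "i < m" "j < m" for i j
    unfolding M_def using vs(2) that by (simp add: mat_of_rows_index)
  obtain d where d: "det M = of_int d"
    using det_in_Ints[OF M] Mij vsR ent by (metis Ints_cases)
  have "d \<noteq> 0" using vs(3) d M_def by auto
  have "\<bar>det M\<bar> \<le> fact m * W ^ m"
    using abs_det_le[OF M] Mij vsR ent by simp
  then have D: "real_of_int \<bar>d\<bar> \<le> fact m * W ^ m" using d by simp
  have "y $ k * of_int \<bar>d\<bar> \<in> \<int>" if k: "k < m" for k
  proof -
    let ?C = "replace_col M (M *\<^sub>v y) k"
    have C: "?C \<in> carrier_mat m m" using M by (auto simp: replace_col_def)
    have "(M *\<^sub>v y) $ i = vs ! i \<bullet> y" if "i < m" for i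
    proof -
      have "(M *\<^sub>v y) $ i = row M i \<bullet> y" using M that by simp
      also have "row M i = vs ! i"
        unfolding M_def using that vs Rc vsR[OF that] by (intro mat_of_rows_row) auto
      finally show ?thesis .
    qed
    then have "det ?C \<in> \<int>"
      using det_in_Ints[OF C] M Mij vsR ent ry by (auto simp: replace_col_def)
    then have "y $ k * of_int d \<in> \<int>"
      using cramer_lemma_mat[OF M y k] d by simp
    then have "y $ k * of_int d * of_int (sgn d) \<in> \<int>" by (rule Ints_mult) (rule Ints_of_int)
    moreover have "of_int d * of_int (sgn d) = (of_int \<bar>d\<bar> :: real)"
      by (metis abs_sgn mult.commute of_int_mult)
    ultimately show ?thesis by (simp add: mult.assoc)
  qed
  then show ?thesis using that[of "\<bar>d\<bar>"] \<open>d \<noteq> 0\<close> D by simp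
qed

section \<open>Feasible points with a maximal set of tight constraints\<close>

definition lin :: "(nat \<Rightarrow> real) \<Rightarrow> nat \<Rightarrow> (nat \<Rightarrow> real) \<Rightarrow> real" where
  "lin c n x = (\<Sum>i\<le>n. c i * x i)"

definition lp_feasible ::
    "'k set \<Rightarrow> ('k \<Rightarrow> nat \<Rightarrow> real) \<Rightarrow> ('k \<Rightarrow> real) \<Rightarrow> nat \<Rightarrow> (nat \<Rightarrow> real) \<Rightarrow> bool" where
  "lp_feasible K c b n x \<longleftrightarrow> (\<forall>k\<in>K. b k \<le> lin (c k) n x) \<and> (\<Sum>i<n. x i) = 1 \<and> 0 < x n"

definition lp_tight ::
    "'k set \<Rightarrow> ('k \<Rightarrow> nat \<Rightarrow> real) \<Rightarrow> ('k \<Rightarrow> real) \<Rightarrow> nat \<Rightarrow> (nat \<Rightarrow> real) \<Rightarrow> 'k set" where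
  "lp_tight K c b n x = {k\<in>K. lin (c k) n x = b k}"

definition lp_maximally_tight ::
    "'k set \<Rightarrow> ('k \<Rightarrow> nat \<Rightarrow> real) \<Rightarrow> ('k \<Rightarrow> real) \<Rightarrow> nat \<Rightarrow> (nat \<Rightarrow> real) \<Rightarrow> bool" where
  "lp_maximally_tight K c b n x \<longleftrightarrow> lp_feasible K c b n x \<and>
     (\<forall>d. (\<Sum>i<n. d i) = 0 \<longrightarrow> (\<forall>k\<in>lp_tight K c b n x. lin (c k) n d = 0) \<longrightarrow> 0 \<le> d n
        \<longrightarrow> (\<forall>k\<in>K. 0 \<le> lin (c k) n d))"

lemma lin_add_scaled: "lin c n (\<lambda>i. x i + t * d i) = lin c n x + t * lin c n d"
  unfolding lin_def by (simp add: algebra_simps sum.distrib sum_distrib_left)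

lemma lin_uminus: "lin c n (\<lambda>i. - d i) = - lin c n d"
  unfolding lin_def by (simp add: sum_negf)

text \<open>Move along d until the first decreasing constraint becomes tight.\<close>

lemma lp_tighten:
  assumes K: "finite K" and x: "lp_feasible K c b n x"
    and d: "(\<Sum>i<n. d i) = 0" "\<forall>k\<in>lp_tight K c b n x. lin (c k) n d = 0" "0 \<le> d n"
    and k0: "k0 \<in> K" "lin (c k0) n d < 0"
  obtains y where "lp_feasible K c b n y" "lp_tight K c b n x \<subset> lp_tight K c b n y"
proof -
  define B where "B = {k\<in>K. lin (c k) n d < 0}"
  define ratio where "ratio k = (lin (c k) n x - b k) / (- lin (c k) n d)" for k
  define t where "t = Min (ratio ` B)"
  have B: "finite B" "k0 \<in> B" using K k0 by (auto simp: B_def)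
  have slack: "0 < lin (c k) n x - b k" if k: "k \<in> B" for k
  proof -
    have "k \<notin> lp_tight K c b n x" using k d(2) by (auto simp: B_def)
    moreover have "b k \<le> lin (c k) n x" using k x by (simp add: B_def lp_feasible_def)
    ultimately show ?thesis using k by (auto simp: lp_tight_def B_def)
  qed
  have t_le: "t \<le> ratio k" if "k \<in> B" for k
    unfolding t_def using B that by auto
  obtain k1 where k1: "k1 \<in> B" "t = ratio k1"
    unfolding t_def using B Min_in[of "ratio ` B"] by blast
  have "0 < t"
    unfolding k1(2) ratio_def using slack[OF k1(1)] k1(1) by (intro divide_pos_pos) (auto simp: B_def)
  define y where "y i = x i + t * d i" for i
  have lin_y: "lin (c k) n y = lin (c k) n x + t * lin (c k) n d" for k
    unfolding y_def by (rule lin_add_scaled)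
  have "b k \<le> lin (c k) n y" if "k \<in> K" for k
  proof (cases "k \<in> B")
    case True
    then have "lin (c k) n d < 0" by (simp add: B_def)
    then have "ratio k * lin (c k) n d \<le> t * lin (c k) n d"
      using t_le[OF True] by (simp add: mult_right_mono_neg)
    moreover have "ratio k * lin (c k) n d = b k - lin (c k) n x"
      unfolding ratio_def using \<open>lin (c k) n d < 0\<close> by (simp add: field_simps)
    ultimately show ?thesis using lin_y by simp
  next
    case False
    then show ?thesis
      using that x \<open>0 < t\<close> lin_y by (simp add: B_def lp_feasible_def add_increasing2)
  qed
  moreover have "(\<Sum>i<n. y i) = (\<Sum>i<n. x i) + t * (\<Sum>i<n. d i)"
    unfolding y_def by (simp add: sum.distrib sum_distrib_left)
  moreover have "0 < y n"
    using x d(3) \<open>0 < t\<close> unfolding y_def lp_feasible_def by (simp add: add_pos_nonneg)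
  ultimately have feasible: "lp_feasible K c b n y"
    using x d(1) by (simp add: lp_feasible_def)
  have "lin (c k1) n y = lin (c k1) n x + ratio k1 * lin (c k1) n d"
    using lin_y k1 by simp
  also have "\<dots> = b k1"
    unfolding ratio_def using k1(1) by (simp add: B_def field_simps)
  finally have "lin (c k1) n y = b k1" .
  then have "k1 \<in> lp_tight K c b n y - lp_tight K c b n x"
    using k1(1) slack[OF k1(1)] by (simp add: lp_tight_def B_def)
  moreover have "lp_tight K c b n x \<subseteq> lp_tight K c b n y"
    using d(2) lin_y by (auto simp: lp_tight_def)
  ultimately show ?thesis using that feasible by blast
qed

lemma lp_maximally_tight_exists:
  assumes K: "finite K" and "lp_feasible K c b n x0"
  obtains x where "lp_maximally_tight K c b n x"
proof -
  have "card (lp_tight K c b n y) < Suc (card K)" for y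
    using card_mono[OF K, of "lp_tight K c b n y"] by (simp add: lp_tight_def)
  then obtain x where x: "lp_feasible K c b n x"
    and x_max: "\<And>y. lp_feasible K c b n y \<Longrightarrow> card (lp_tight K c b n y) \<le> card (lp_tight K c b n x)"
    using ex_has_greatest_nat[of "lp_feasible K c b n" x0 "\<lambda>y. card (lp_tight K c b n y)"] assms(2)
    by blast
  have "0 \<le> lin (c k) n d"
    if d: "(\<Sum>i<n. d i) = 0" "\<forall>k\<in>lp_tight K c b n x. lin (c k) n d = 0" "0 \<le> d n"
      and "k \<in> K" for d k
  proof (rule ccontr)
    assume "\<not> 0 \<le> lin (c k) n d"
    then obtain y where "lp_feasible K c b n y" "lp_tight K c b n x \<subset> lp_tight K c b n y"
      using lp_tighten[OF K x d \<open>k \<in> K\<close>] by auto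
    moreover have "finite (lp_tight K c b n y)" using K by (simp add: lp_tight_def)
    ultimately have "card (lp_tight K c b n x) < card (lp_tight K c b n y)"
      by (simp add: psubset_card_mono)
    with x_max \<open>lp_feasible K c b n y\<close> show False by (simp add: not_le[symmetric])
  qed
  then show ?thesis using that x unfolding lp_maximally_tight_def by blast
qed

section \<open>Sparse rational solutions of threshold conditions\<close>

text \<open>Variable n is a slack: a failing condition j is encoded as
  (\<Sum>i<n. a j i * x i) + x n \<le> s j, which is strict because x n > 0.\<close>

locale threshold_system =
  fixes n J :: nat and a :: "nat \<Rightarrow> nat \<Rightarrow> real" and s :: "nat \<Rightarrow> rat" and p :: "nat \<Rightarrow> real"
  assumes coeff_01: "a j i \<in> {0, 1}"
    and p_nonneg: "i < n \<Longrightarrow> 0 \<le> p i"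
    and p_sum: "(\<Sum>i<n. p i) = 1"
begin

definition holds :: "nat \<Rightarrow> bool" where
  "holds j \<longleftrightarrow> real_of_rat (s j) \<le> (\<Sum>i<n. a j i * p i)"

definition coeff :: "nat + nat \<Rightarrow> nat \<Rightarrow> real" where
  "coeff k = (case k of
       Inl i \<Rightarrow> (\<lambda>l. if l = i then 1 else 0)
     | Inr j \<Rightarrow> if holds j then (\<lambda>l. if l < n then a j l else 0)
               else (\<lambda>l. if l < n then - a j l else if l = n then -1 else 0))"

definition rhs :: "nat + nat \<Rightarrow> real" where
  "rhs k = (case k of
       Inl i \<Rightarrow> 0
     | Inr j \<Rightarrow> if holds j then real_of_rat (s j) else - real_of_rat (s j))"

definition constraints :: "(nat + nat) set" where
  "constraints = Inl ` {..<n} \<union> Inr ` {..<J}"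

lemma finite_constraints: "finite constraints"
  by (simp add: constraints_def)

lemma Inl_in_constraints [simp]: "Inl i \<in> constraints \<longleftrightarrow> i < n"
  and Inr_in_constraints [simp]: "Inr j \<in> constraints \<longleftrightarrow> j < J"
  by (auto simp: constraints_def)

lemma constraints_cases [consumes 1, case_names Inl Inr]:
  assumes "k \<in> constraints"
  obtains (Inl) i where "i < n" "k = Inl i" | (Inr) j where "j < J" "k = Inr j"
  using assms by (auto simp: constraints_def)

lemma lin_coeff_Inl: "i < n \<Longrightarrow> lin (coeff (Inl i)) n x = x i"
proof -
  assume "i < n"
  have "lin (coeff (Inl i)) n x = (\<Sum>l\<le>n. if l = i then x l else 0)"
    unfolding lin_def coeff_def by (intro sum.cong) auto
  then show ?thesis using \<open>i < n\<close> by simp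
qed

lemma lin_coeff_holds: "holds j \<Longrightarrow> lin (coeff (Inr j)) n x = (\<Sum>i<n. a j i * x i)"
proof -
  assume "holds j"
  then have "lin (coeff (Inr j)) n x = (\<Sum>i\<le>n. (if i < n then a j i else 0) * x i)"
    by (simp add: lin_def coeff_def)
  also have "\<dots> = (\<Sum>i<n. a j i * x i)"
    by (simp add: lessThan_Suc_atMost[symmetric])
  finally show ?thesis .
qed

lemma lin_coeff_fails: "\<not> holds j \<Longrightarrow> lin (coeff (Inr j)) n x = - (\<Sum>i<n. a j i * x i) - x n"
proof -
  assume "\<not> holds j"
  then have "lin (coeff (Inr j)) n x
      = (\<Sum>i\<le>n. (if i < n then - a j i else if i = n then -1 else 0) * x i)"
    by (simp add: lin_def coeff_def)
  also have "\<dots> = (\<Sum>i<n. - a j i * x i) - x n"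
    by (simp add: lessThan_Suc_atMost[symmetric])
  finally show ?thesis by (simp add: sum_negf)
qed

lemma coeff_Inr_unit: "coeff (Inr j) l \<in> \<int> \<and> \<bar>coeff (Inr j) l\<bar> \<le> 1"
  using coeff_01[of j l] by (auto simp: coeff_def)

lemma lp_feasible_exists: "\<exists>x. lp_feasible constraints coeff rhs n x"
proof -
  define gap where "gap j = real_of_rat (s j) - (\<Sum>i<n. a j i * p i)" for j
  define \<epsilon> where "\<epsilon> = Min (insert 1 (gap ` {j. j < J \<and> \<not> holds j}))"
  have "0 < \<epsilon>"
    unfolding \<epsilon>_def by (subst Min_gr_iff) (auto simp: gap_def holds_def)
  have \<epsilon>_le: "\<epsilon> \<le> gap j" if "j < J" "\<not> holds j" for j
    unfolding \<epsilon>_def using that by (intro Min_le) auto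
  define x where "x l = (if l < n then p l else \<epsilon>)" for l
  have "rhs k \<le> lin (coeff k) n x" if "k \<in> constraints" for k
    using that
  proof (cases rule: constraints_cases)
    case (Inl i)
    then show ?thesis using p_nonneg by (simp add: lin_coeff_Inl rhs_def x_def)
  next
    case (Inr j)
    have "(\<Sum>i<n. a j i * x i) = (\<Sum>i<n. a j i * p i)" by (simp add: x_def)
    then show ?thesis
      using Inr \<epsilon>_le[of j]
      by (cases "holds j") (auto simp: lin_coeff_holds lin_coeff_fails rhs_def holds_def gap_def x_def)
  qed
  moreover have "(\<Sum>i<n. x i) = 1" using p_sum by (simp add: x_def)
  ultimately show ?thesis
    unfolding lp_feasible_def using \<open>0 < \<epsilon>\<close> by (intro exI[of _ x]) (simp add: x_def)
qed

end

locale threshold_vertex = threshold_system +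
  fixes x :: "nat \<Rightarrow> real"
  assumes maximally_tight: "lp_maximally_tight constraints coeff rhs n x"
begin

abbreviation tight :: "(nat + nat) set" where
  "tight \<equiv> lp_tight constraints coeff rhs n x"

lemma x_feasible: "lp_feasible constraints coeff rhs n x"
  using maximally_tight by (simp add: lp_maximally_tight_def)

lemma x_constraint: "k \<in> constraints \<Longrightarrow> rhs k \<le> lin (coeff k) n x"
  using x_feasible by (simp add: lp_feasible_def)

lemma x_nonneg: "i < n \<Longrightarrow> 0 \<le> x i"
  using x_constraint[of "Inl i"] by (simp add: rhs_def lin_coeff_Inl)

lemma x_sum: "(\<Sum>i<n. x i) = 1"
  using x_feasible by (simp add: lp_feasible_def)

lemma slack_pos: "0 < x n"
  using x_feasible by (simp add: lp_feasible_def)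

lemma holds_iff:
  assumes "j < J"
  shows "real_of_rat (s j) \<le> (\<Sum>i<n. a j i * x i) \<longleftrightarrow> holds j"
proof -
  have "rhs (Inr j) \<le> lin (coeff (Inr j)) n x"
    using x_constraint assms by simp
  then show ?thesis
    using slack_pos by (cases "holds j") (auto simp: rhs_def lin_coeff_holds lin_coeff_fails)
qed

lemma tight_direction_vanishes:
  assumes d: "(\<Sum>i<n. d i) = 0" "\<forall>k\<in>tight. lin (coeff k) n d = 0" and "i < n"
  shows "d i = 0"
proof -
  define d' where "d' = (if 0 \<le> d n then d else (\<lambda>l. - d l))"
  have d': "(\<Sum>i<n. d' i) = 0" "\<forall>k\<in>tight. lin (coeff k) n d' = 0" "0 \<le> d' n"
    using d by (auto simp: d'_def sum_negf lin_uminus)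
  then have "\<forall>k\<in>constraints. 0 \<le> lin (coeff k) n d'"
    using maximally_tight by (simp add: lp_maximally_tight_def)
  then have "0 \<le> d' l" if "l < n" for l
    using that lin_coeff_Inl[OF that, of d'] by (metis Inl_in_constraints)
  then have "d' i = 0"
    using sum_nonneg_eq_0_iff[of "{..<n}" d'] d'(1) \<open>i < n\<close> by simp
  then show ?thesis by (simp add: d'_def split: if_splits)
qed

lemma failing_condition_tight:
  assumes "\<not> (\<forall>j<J. holds j)"
  shows "\<exists>j<J. \<not> holds j \<and> Inr j \<in> tight"
proof (rule ccontr)
  assume no: "\<not> (\<exists>j<J. \<not> holds j \<and> Inr j \<in> tight)"
  define d where "d l = (if l = n then 1 else 0 :: real)" for l
  have "lin (coeff k) n d = 0" if "k \<in> tight" for k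
  proof -
    have "k \<in> constraints" using that by (simp add: lp_tight_def)
    then show ?thesis
    proof (cases rule: constraints_cases)
      case (Inl i)
      then show ?thesis by (simp add: lin_coeff_Inl d_def)
    next
      case (Inr j)
      then have "holds j" using no \<open>k \<in> tight\<close> by blast
      then show ?thesis using Inr by (simp add: lin_coeff_holds d_def)
    qed
  qed
  moreover have "(\<Sum>i<n. d i) = 0" "0 \<le> d n" by (simp_all add: d_def)
  ultimately have nonneg: "\<forall>k\<in>constraints. 0 \<le> lin (coeff k) n d"
    using maximally_tight by (simp add: lp_maximally_tight_def)
  obtain j where "j < J" "\<not> holds j" using assms by blast
  then have "0 \<le> lin (coeff (Inr j)) n d" using bspec[OF nonneg, of "Inr j"] by simp
  then show False using \<open>\<not> holds j\<close> by (simp add: lin_coeff_fails d_def)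
qed

definition cols :: "nat set" where
  "cols = {i. i < n \<and> 0 < x i} \<union> (if \<forall>j<J. holds j then {} else {n})"

definition col :: "nat \<Rightarrow> nat" where
  "col = (!) (sorted_list_of_set cols)"

lemma finite_cols: "finite cols"
  by (simp add: cols_def)

lemma cols_le: "l \<in> cols \<Longrightarrow> l \<le> n"
  by (auto simp: cols_def split: if_splits)

lemma bij_col: "bij_betw col {..<card cols} cols"
  unfolding col_def using finite_cols by (intro bij_betw_nth) auto

lemma col_in_cols: "k < card cols \<Longrightarrow> col k \<in> cols"
  using bij_betw_apply[OF bij_col] by simp

lemma cols_obtain_col:
  assumes "l \<in> cols"
  obtains k where "k < card cols" "col k = l"
  using assms bij_col by (force simp: bij_betw_def)

lemma sum_cols: "(\<Sum>k<card cols. g (col k)) = (\<Sum>l\<in>cols. g l)"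
  using sum.reindex_bij_betw[OF bij_col] by simp

lemma x_outside_cols: "i < n \<Longrightarrow> i \<notin> cols \<Longrightarrow> x i = 0"
  using x_nonneg[of i] by (auto simp: cols_def)

lemma coeff_slack_outside_cols: "j < J \<Longrightarrow> n \<notin> cols \<Longrightarrow> coeff (Inr j) n = 0"
  by (auto simp: cols_def coeff_def split: if_splits)

lemma lin_eq_sum_cols:
  assumes "\<And>l. l \<le> n \<Longrightarrow> l \<notin> cols \<Longrightarrow> c l * z l = 0"
  shows "lin c n z = (\<Sum>l\<in>cols. c l * z l)"
  unfolding lin_def using assms cols_le by (intro sum.mono_neutral_left[symmetric]) auto

lemma sum_lessThan_eq_sum_cols:
  assumes "\<And>i. i < n \<Longrightarrow> i \<notin> cols \<Longrightarrow> z i = 0"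
  shows "(\<Sum>i<n. z i) = (\<Sum>l\<in>cols. if l < n then z l else 0)"
proof -
  have "(\<Sum>i<n. z i) = (\<Sum>i\<in>cols \<inter> {..<n}. z i)"
    using assms by (intro sum.mono_neutral_right) auto
  also have "\<dots> = (\<Sum>l\<in>cols. if l < n then z l else 0)"
    using finite_cols by (simp add: sum.inter_restrict)
  finally show ?thesis .
qed

definition spread :: "real vec \<Rightarrow> nat \<Rightarrow> real" where
  "spread w l = (\<Sum>k<card cols. if col k = l then w $ k else 0)"

lemma spread_col: "k < card cols \<Longrightarrow> spread w (col k) = w $ k"
proof -
  assume k: "k < card cols"
  have "col k' = col k \<longleftrightarrow> k' = k" if "k' < card cols" for k'
    using bij_col k that by (auto simp: bij_betw_def inj_on_def)
  then have "spread w (col k) = (\<Sum>k'<card cols. if k' = k then w $ k' else 0)"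
    unfolding spread_def by (intro sum.cong) auto
  then show ?thesis using k by simp
qed

lemma spread_outside_cols: "l \<notin> cols \<Longrightarrow> spread w l = 0"
  unfolding spread_def using col_in_cols by (intro sum.neutral) auto

definition denom :: "nat \<Rightarrow> int" where
  "denom j = snd (quotient_of (s j))"

lemma denom_pos: "0 < denom j"
  unfolding denom_def by (metis prod.collapse quotient_of_denom_pos)

definition cond_row :: "nat \<Rightarrow> real vec" where
  "cond_row j = vec (card cols) (\<lambda>k. of_int (denom j) * coeff (Inr j) (col k))"

definition sum_row :: "real vec" where
  "sum_row = vec (card cols) (\<lambda>k. if col k < n then 1 else 0)"

definition rows :: "real vec set" where
  "rows = insert sum_row (cond_row ` {j. j < J \<and> Inr j \<in> tight})"

definition x_vec :: "real vec" where
  "x_vec = vec (card cols) (\<lambda>k. x (col k))"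

lemma finite_rows: "finite rows"
  by (simp add: rows_def)

lemma rows_carrier: "rows \<subseteq> carrier_vec (card cols)"
  by (auto simp: rows_def cond_row_def sum_row_def)

lemma x_vec_carrier: "x_vec \<in> carrier_vec (card cols)"
  by (simp add: x_vec_def)

lemma card_rows_le: "card rows \<le> Suc J"
proof -
  have "card rows \<le> Suc (card (cond_row ` {j. j < J \<and> Inr j \<in> tight}))"
    unfolding rows_def by (rule card_insert_le_m1) auto
  also have "card (cond_row ` {j. j < J \<and> Inr j \<in> tight}) \<le> card {..<J}"
    by (rule order_trans[OF card_image_le card_mono]) auto
  finally show ?thesis by simp
qed

lemma scalar_prod_vec_cols:
  "w \<in> carrier_vec (card cols) \<Longrightarrow> vec (card cols) f \<bullet> w = (\<Sum>k<card cols. f k * w $ k)"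
  unfolding scalar_prod_def by (simp add: atLeast0LessThan)

lemma cond_row_scalar_prod:
  assumes w: "w \<in> carrier_vec (card cols)"
  shows "cond_row j \<bullet> w = of_int (denom j) * lin (coeff (Inr j)) n (spread w)"
proof -
  have "cond_row j \<bullet> w = (\<Sum>k<card cols. of_int (denom j) * (coeff (Inr j) (col k) * spread w (col k)))"
    unfolding cond_row_def scalar_prod_vec_cols[OF w] by (intro sum.cong) (auto simp: spread_col)
  also have "\<dots> = of_int (denom j) * (\<Sum>k<card cols. coeff (Inr j) (col k) * spread w (col k))"
    by (simp add: sum_distrib_left)
  also have "(\<Sum>k<card cols. coeff (Inr j) (col k) * spread w (col k))
      = (\<Sum>l\<in>cols. coeff (Inr j) l * spread w l)"
    by (rule sum_cols)
  also have "(\<Sum>l\<in>cols. coeff (Inr j) l * spread w l) = lin (coeff (Inr j)) n (spread w)"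
    by (rule lin_eq_sum_cols[symmetric]) (simp add: spread_outside_cols)
  finally show ?thesis .
qed

lemma sum_row_scalar_prod:
  assumes w: "w \<in> carrier_vec (card cols)"
  shows "sum_row \<bullet> w = (\<Sum>i<n. spread w i)"
proof -
  have "sum_row \<bullet> w = (\<Sum>k<card cols. if col k < n then spread w (col k) else 0)"
    unfolding sum_row_def scalar_prod_vec_cols[OF w] by (intro sum.cong) (auto simp: spread_col)
  also have "\<dots> = (\<Sum>l\<in>cols. if l < n then spread w l else 0)"
    using sum_cols[of "\<lambda>l. if l < n then spread w l else 0"] by simp
  also have "\<dots> = (\<Sum>i<n. spread w i)"
    by (rule sum_lessThan_eq_sum_cols[symmetric]) (simp add: spread_outside_cols)
  finally show ?thesis .
qed

lemma spread_x_vec: "spread x_vec l = (if l \<in> cols then x l else 0)"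
proof (cases "l \<in> cols")
  case True
  then obtain k where "k < card cols" "col k = l" by (rule cols_obtain_col)
  then show ?thesis using True spread_col[of k x_vec] by (simp add: x_vec_def)
qed (simp add: spread_outside_cols)

lemma rows_kernel_trivial:
  assumes w: "w \<in> carrier_vec (card cols)" and orth: "\<forall>r\<in>rows. r \<bullet> w = 0"
  shows "w = 0\<^sub>v (card cols)"
proof -
  let ?d = "spread w"
  have sum0: "(\<Sum>i<n. ?d i) = 0"
    using orth sum_row_scalar_prod[OF w] by (simp add: rows_def)
  have tight0: "\<forall>k\<in>tight. lin (coeff k) n ?d = 0"
  proof
    fix k assume k: "k \<in> tight"
    then have "k \<in> constraints" by (simp add: lp_tight_def)
    then show "lin (coeff k) n ?d = 0"
    proof (cases rule: constraints_cases)
      case (Inl i)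
      with k have "x i = 0" by (simp add: lp_tight_def lin_coeff_Inl rhs_def)
      then have "i \<notin> cols" using Inl by (auto simp: cols_def split: if_splits)
      then show ?thesis using Inl by (simp add: lin_coeff_Inl spread_outside_cols)
    next
      case (Inr j)
      then have "cond_row j \<bullet> w = 0" using k orth by (auto simp: rows_def)
      then show ?thesis using Inr cond_row_scalar_prod[OF w] denom_pos[of j] by simp
    qed
  qed
  have below: "?d i = 0" if "i < n" for i
    using tight_direction_vanishes[OF sum0 tight0 that] .
  have slack: "?d n = 0" if "n \<in> cols"
  proof -
    from that have "\<not> (\<forall>j<J. holds j)" by (auto simp: cols_def split: if_splits)
    then obtain j where j: "\<not> holds j" "Inr j \<in> tight" using failing_condition_tight by blast
    have "lin (coeff (Inr j)) n ?d = 0" using tight0 j(2) by blast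
    moreover have "(\<Sum>i<n. a j i * ?d i) = 0" using below by (intro sum.neutral) simp
    ultimately show ?thesis using lin_coeff_fails[OF j(1)] by simp
  qed
  show ?thesis
  proof (rule eq_vecI)
    fix k assume "k < dim_vec (0\<^sub>v (card cols))"
    then have k: "k < card cols" by simp
    have "?d (col k) = 0"
      using below slack col_in_cols[OF k] cols_le[OF col_in_cols[OF k]] by (cases "col k < n") auto
    then show "w $ k = 0\<^sub>v (card cols) $ k" using spread_col[OF k] k by simp
  qed (use w in simp)
qed

lemma rows_x_vec_Ints: "r \<in> rows \<Longrightarrow> r \<bullet> x_vec \<in> \<int>"
proof (unfold rows_def, elim insertE imageE)
  assume "r = sum_row"
  have "(\<Sum>i<n. spread x_vec i) = (\<Sum>i<n. x i)"
    using x_outside_cols by (intro sum.cong) (auto simp: spread_x_vec)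
  then show ?thesis
    using \<open>r = sum_row\<close> sum_row_scalar_prod[OF x_vec_carrier] x_sum by simp
next
  fix j assume r: "r = cond_row j" and j: "j \<in> {j. j < J \<and> Inr j \<in> tight}"
  have "lin (coeff (Inr j)) n (spread x_vec) = lin (coeff (Inr j)) n x"
    unfolding lin_def using j x_outside_cols coeff_slack_outside_cols cols_le
    by (intro sum.cong) (auto simp: spread_x_vec le_less)
  also have "\<dots> = rhs (Inr j)" using j by (simp add: lp_tight_def)
  finally have "r \<bullet> x_vec = of_int (denom j) * rhs (Inr j)"
    using r cond_row_scalar_prod[OF x_vec_carrier] by simp
  moreover have "of_int (denom j) * real_of_rat (s j) \<in> \<int>"
    using denominator_mult_of_rat[of "s j"] by (simp add: denom_def)
  ultimately show ?thesis by (auto simp: rhs_def)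
qed

lemma rows_entries:
  fixes r :: "real vec"
  assumes den: "\<And>j. j < J \<Longrightarrow> real_of_int (denom j) \<le> 2 ^ L" and r: "r \<in> rows"
    and k: "k < card cols"
  shows "r $ k \<in> \<int> \<and> \<bar>r $ k\<bar> \<le> 2 ^ L"
  using r unfolding rows_def
proof (elim insertE imageE)
  assume "r = sum_row"
  have "(1::real) \<le> 2 ^ L" by simp
  then show ?thesis using \<open>r = sum_row\<close> k by (simp add: sum_row_def)
next
  fix j assume r: "r = cond_row j" and j: "j \<in> {j. j < J \<and> Inr j \<in> tight}"
  have "r $ k = of_int (denom j) * coeff (Inr j) (col k)" using r k by (simp add: cond_row_def)
  moreover have "\<bar>of_int (denom j) * coeff (Inr j) (col k)\<bar> \<le> of_int (denom j) * 1"
    using coeff_Inr_unit[of j "col k"] denom_pos[of j] by (simp add: abs_mult mult_left_mono)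
  ultimately show ?thesis
    using coeff_Inr_unit[of j "col k"] order_trans[OF _ den[of j]] j by auto
qed

lemma card_cols_le: "card cols \<le> Suc J"
  using dim_le_card_of_trivial_kernel[OF finite_rows rows_carrier rows_kernel_trivial] card_rows_le
  by simp

lemma support_subset_cols: "{i. i < n \<and> 0 < x i} \<subseteq> cols"
  by (auto simp: cols_def)

lemma card_cols_pos: "0 < card cols"
proof -
  have "{i. i < n \<and> 0 < x i} \<noteq> {}"
  proof
    assume "{i. i < n \<and> 0 < x i} = {}"
    then have "x i = 0" if "i < n" for i using that x_nonneg[of i] by force
    then show False using x_sum by simp
  qed
  then show ?thesis using support_subset_cols finite_cols by (auto simp: card_gt_0_iff)
qed

lemma x_common_denominator:
  assumes "\<And>j. j < J \<Longrightarrow> real_of_int (denom j) \<le> 2 ^ L"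
  obtains D :: int where "0 < D" "real_of_int D \<le> fact (card cols) * (2 ^ L) ^ card cols"
    "\<And>i. i < n \<Longrightarrow> x i * of_int D \<in> \<int>"
proof -
  obtain D :: int where D: "0 < D" "real_of_int D \<le> fact (card cols) * (2 ^ L) ^ card cols"
    "\<And>k. k < card cols \<Longrightarrow> x_vec $ k * of_int D \<in> \<int>"
    using common_denominator_of_unique_solution[OF finite_rows rows_carrier rows_kernel_trivial
        x_vec_carrier rows_x_vec_Ints rows_entries[OF assms]] by blast
  have "x i * of_int D \<in> \<int>" if "i < n" for i
  proof (cases "i \<in> cols")
    case True
    then obtain k where k: "k < card cols" "col k = i" by (rule cols_obtain_col)
    then show ?thesis using D(3)[OF k(1)] by (simp add: x_vec_def)
  qed (use that x_outside_cols in simp)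
  then show ?thesis using that D(1,2) by blast
qed

end

context threshold_system
begin

lemma sparse_rational_solution:
  assumes den: "\<And>j. j < J \<Longrightarrow> real_of_int (snd (quotient_of (s j))) \<le> 2 ^ L"
  obtains x m D where "\<And>i. i < n \<Longrightarrow> 0 \<le> x i" "(\<Sum>i<n. x i) = 1"
    "\<And>j. j < J \<Longrightarrow> real_of_rat (s j) \<le> (\<Sum>i<n. a j i * x i) \<longleftrightarrow> holds j"
    "card {i. i < n \<and> 0 < x i} \<le> m" "1 \<le> m" "m \<le> Suc J"
    "0 < D" "real_of_int D \<le> fact m * (2 ^ L) ^ m" "\<And>i. i < n \<Longrightarrow> x i * of_int D \<in> \<int>"
proof -
  obtain x where x: "lp_maximally_tight constraints coeff rhs n x"
    using lp_maximally_tight_exists[OF finite_constraints] lp_feasible_exists by blast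
  interpret threshold_vertex n J a s p x
    by unfold_locales (fact x)
  obtain D where "0 < D" "real_of_int D \<le> fact (card cols) * (2 ^ L) ^ card cols"
    "\<And>i. i < n \<Longrightarrow> x i * of_int D \<in> \<int>"
    using x_common_denominator den unfolding denom_def by blast
  moreover have "card {i. i < n \<and> 0 < x i} \<le> card cols"
    using card_mono[OF finite_cols support_subset_cols] .
  ultimately show ?thesis
    using that[of x "card cols" D] x_nonneg x_sum holds_iff card_cols_pos card_cols_le by simp
qed

end

primrec patoms :: "'b pfml \<Rightarrow> (rat \<times> 'b fml) list" where
  "patoms (Pge s a) = [(s, a)]"
| "patoms (PNeg A) = patoms A"
| "patoms (PConj A B) = patoms A @ patoms B"

lemma psat_cong_atoms:
  assumes "\<And>s \<alpha>. (s, \<alpha>) \<in> set (patoms A) \<Longrightarrow>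
    real_of_rat s \<le> measure M (ext M v \<alpha>) \<longleftrightarrow> real_of_rat s \<le> measure M' (ext M' v' \<alpha>)"
  shows "psat M v A \<longleftrightarrow> psat M' v' A"
  using assms by (induction A) auto

lemma fsize_pos: "Suc 0 \<le> fsize a"
  by (induction a) auto

lemma two_length_patoms_le: "2 * length (patoms A) \<le> psize A"
  by (induction A) (auto simp: fsize_pos)

lemma patoms_nonempty: "patoms A \<noteq> []"
  by (induction A) auto

lemma ratsize_le_maxratsize: "(s, \<alpha>) \<in> set (patoms A) \<Longrightarrow> ratsize s \<le> maxratsize A"
proof -
  assume "(s, \<alpha>) \<in> set (patoms A)"
  moreover have "thresholds A = fst ` set (patoms A)" "finite (thresholds A)"
    by (induction A) auto
  ultimately show ?thesis unfolding maxratsize_def by (intro Max_ge) force+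
qed

lemma denominator_le_two_power_maxratsize:
  assumes "(s, \<alpha>) \<in> set (patoms A)"
  shows "real_of_int (snd (quotient_of s)) \<le> 2 ^ maxratsize A"
proof -
  have "(2::real) ^ ratsize s \<le> 2 ^ maxratsize A"
    using ratsize_le_maxratsize[OF assms] by (rule power_increasing) simp
  then show ?thesis using denominator_less_two_power_ratsize[of s] by linarith
qed

lemma Suc_length_patoms_le: "Suc (length (patoms A)) \<le> psize A"
  using two_length_patoms_le[of A] patoms_nonempty[of A] by (cases "patoms A") auto

lemma fbasics_patoms: "(s, \<alpha>) \<in> set (patoms A) \<Longrightarrow> fbasics \<alpha> \<subseteq> pbasics A"
  by (induction A) auto

lemma finite_pbasics: "finite (pbasics A)"
proof -
  have "finite (fbasics a)" for a :: "'b fml" by (induction a) auto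
  then show ?thesis by (induction A) auto
qed

lemma pbasics_nonempty: "pbasics A \<noteq> {}"
proof -
  have "fbasics a \<noteq> {}" for a :: "'b fml" by (induction a) auto
  then show ?thesis by (induction A) auto
qed

lemma eval_cong: "(\<And>b. b \<in> fbasics a \<Longrightarrow> u b = u' b) \<Longrightarrow> eval u a = eval u' a"
  by (induction a) auto

lemma eval_conjs_literals:
  "xs \<noteq> [] \<Longrightarrow> eval u (conjs (map (\<lambda>B. if f B then Basic B else Neg (Basic B)) xs))
     \<longleftrightarrow> (\<forall>B\<in>set xs. u B = f B)"
proof (induction xs)
  case (Cons x xs)
  then show ?case by (cases xs) auto
qed simp

section \<open>Valuations up to the basic formulas of A\<close>

definition restrict_val :: "'b set \<Rightarrow> ('b \<Rightarrow> bool) \<Rightarrow> 'b \<Rightarrow> bool" where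
  "restrict_val Bs u b \<longleftrightarrow> b \<in> Bs \<and> u b"

lemma restrict_val_eq_iff: "restrict_val Bs u = restrict_val Bs u' \<longleftrightarrow> (\<forall>b\<in>Bs. u b = u' b)"
  by (auto simp: restrict_val_def fun_eq_iff)

lemma eval_restrict_val: "fbasics \<alpha> \<subseteq> Bs \<Longrightarrow> eval (restrict_val Bs u) \<alpha> = eval u \<alpha>"
  by (rule eval_cong) (auto simp: restrict_val_def)

lemma finite_range_restrict_val: "finite Bs \<Longrightarrow> finite (range (restrict_val Bs))"
proof -
  assume "finite Bs"
  have "range (restrict_val Bs) \<subseteq> (\<lambda>S b. b \<in> S) ` Pow Bs"
  proof
    fix t assume "t \<in> range (restrict_val Bs)"
    then have "t = (\<lambda>b. b \<in> {b. t b})" "{b. t b} \<in> Pow Bs"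
      by (auto simp: restrict_val_def)
    then show "t \<in> (\<lambda>S b. b \<in> S) ` Pow Bs" by blast
  qed
  then show ?thesis using \<open>finite Bs\<close> by (meson finite_Pow_iff finite_imageI finite_subset)
qed

definition char_fml :: "'b set \<Rightarrow> ('b \<Rightarrow> bool) \<Rightarrow> 'b fml" where
  "char_fml Bs t = conjs (map (\<lambda>B. if t B then Basic B else Neg (Basic B))
     (SOME xs. distinct xs \<and> set xs = Bs))"

lemma eval_char_fml:
  assumes "finite Bs" "Bs \<noteq> {}"
  shows "eval u (char_fml Bs t) \<longleftrightarrow> (\<forall>B\<in>Bs. u B = t B)"
proof -
  let ?xs = "SOME xs. distinct xs \<and> set xs = Bs"
  have "distinct ?xs \<and> set ?xs = Bs"
    by (rule someI_ex) (use finite_distinct_list[OF assms(1)] in blast)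
  then have "?xs \<noteq> []" "set ?xs = Bs" using assms(2) by auto
  then show ?thesis
    unfolding char_fml_def using eval_conjs_literals[of ?xs u t] by simp
qed

lemma ext_char_fml:
  assumes "finite Bs" "Bs \<noteq> {}"
  shows "ext M v (char_fml Bs (restrict_val Bs u))
      = {w \<in> space M. restrict_val Bs (v w) = restrict_val Bs u}"
  unfolding ext_def eval_char_fml[OF assms] restrict_val_eq_iff by (auto simp: restrict_val_def)

lemma cpnb_determines_restrict_val:
  assumes "a \<in> cpnb A" "eval u a" "eval u' a"
  shows "restrict_val (pbasics A) u = restrict_val (pbasics A) u'"
proof -
  obtain f xs where a: "a = conjs (map (\<lambda>B. if f B then Basic B else Neg (Basic B)) xs)"
    and xs: "set xs = pbasics A"
    using assms(1) unfolding cpnb_def by blast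
  have "xs \<noteq> []" using xs pbasics_nonempty[of A] by auto
  then show ?thesis
    using assms(2,3) xs eval_conjs_literals[of xs] unfolding a restrict_val_eq_iff by auto
qed

definition vals_on :: "'w measure \<Rightarrow> ('w \<Rightarrow> 'b \<Rightarrow> bool) \<Rightarrow> 'b set \<Rightarrow> ('b \<Rightarrow> bool) set" where
  "vals_on M v Bs = (\<lambda>w. restrict_val Bs (v w)) ` space M"

definition val_class :: "'w measure \<Rightarrow> ('w \<Rightarrow> 'b \<Rightarrow> bool) \<Rightarrow> 'b set \<Rightarrow> ('b \<Rightarrow> bool) \<Rightarrow> 'w set" where
  "val_class M v Bs t = {w \<in> space M. restrict_val Bs (v w) = t}"

lemma finite_vals_on: "finite Bs \<Longrightarrow> finite (vals_on M v Bs)"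
  using finite_range_restrict_val by (rule finite_subset[rotated]) (auto simp: vals_on_def)

lemma val_class_in_sets:
  assumes PL: "PL_model Adm M v" and Bs: "finite Bs" "Bs \<noteq> {}" and t: "t \<in> vals_on M v Bs"
  shows "val_class M v Bs t \<in> sets M"
proof -
  obtain w where "t = restrict_val Bs (v w)" using t by (auto simp: vals_on_def)
  then have "val_class M v Bs t = ext M v (char_fml Bs (restrict_val Bs (v w)))"
    using ext_char_fml[OF Bs, of M v "v w"] by (simp add: val_class_def)
  then show ?thesis using PL by (simp add: PL_model_def)
qed

lemma measure_UN_val_class:
  assumes PL: "PL_model Adm M v" and Bs: "finite Bs" "Bs \<noteq> {}" and X: "X \<subseteq> vals_on M v Bs"
  shows "measure M (\<Union>t\<in>X. val_class M v Bs t) = (\<Sum>t\<in>X. measure M (val_class M v Bs t))"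
proof (rule finite_measure.finite_measure_finite_Union)
  show "finite_measure M" using PL by (auto simp: PL_model_def intro: prob_space.finite_measure)
  show "finite X" using finite_vals_on[OF Bs(1)] X by (rule finite_subset[rotated])
  show "val_class M v Bs ` X \<subseteq> sets M" using val_class_in_sets[OF PL Bs] X by blast
  show "disjoint_family_on (val_class M v Bs) X"
    by (auto simp: disjoint_family_on_def val_class_def)
qed

lemma measure_ext_eq_sum_val_class:
  assumes PL: "PL_model Adm M v" and Bs: "finite Bs" "Bs \<noteq> {}" and \<alpha>: "fbasics \<alpha> \<subseteq> Bs"
  shows "measure M (ext M v \<alpha>)
    = (\<Sum>t\<in>vals_on M v Bs. if eval t \<alpha> then measure M (val_class M v Bs t) else 0)"
proof -
  let ?X = "{t \<in> vals_on M v Bs. eval t \<alpha>}"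
  have ext_eq: "ext M v \<alpha> = (\<Union>t\<in>?X. val_class M v Bs t)"
  proof (intro equalityI subsetI)
    fix w assume "w \<in> ext M v \<alpha>"
    then have "w \<in> val_class M v Bs (restrict_val Bs (v w))" "restrict_val Bs (v w) \<in> ?X"
      using eval_restrict_val[OF \<alpha>] by (auto simp: ext_def val_class_def vals_on_def)
    then show "w \<in> (\<Union>t\<in>?X. val_class M v Bs t)" by blast
  next
    fix w assume "w \<in> (\<Union>t\<in>?X. val_class M v Bs t)"
    then show "w \<in> ext M v \<alpha>"
      using eval_restrict_val[OF \<alpha>] by (auto simp: ext_def val_class_def)
  qed
  have "measure M (ext M v \<alpha>) = (\<Sum>t\<in>?X. measure M (val_class M v Bs t))"
    unfolding ext_eq by (rule measure_UN_val_class[OF PL Bs]) auto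
  also have "\<dots> = (\<Sum>t\<in>vals_on M v Bs. if eval t \<alpha> then measure M (val_class M v Bs t) else 0)"
    by (rule sum.inter_filter[OF finite_vals_on[OF Bs(1)]])
  finally show ?thesis .
qed

lemma sum_measure_val_class:
  assumes PL: "PL_model Adm M v" and Bs: "finite Bs" "Bs \<noteq> {}"
  shows "(\<Sum>t\<in>vals_on M v Bs. measure M (val_class M v Bs t)) = 1"
proof -
  have "space M = (\<Union>t\<in>vals_on M v Bs. val_class M v Bs t)"
    by (auto simp: val_class_def vals_on_def)
  moreover have "measure M (space M) = 1"
    using PL prob_space.prob_space by (auto simp: PL_model_def)
  ultimately show ?thesis using measure_UN_val_class[OF PL Bs order_refl] by simp
qed

lemma world_decomposition:
  assumes PL: "PL_model Adm M v" and Bs: "finite Bs" "Bs \<noteq> {}"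
  obtains ws :: "'w list" and p :: "nat \<Rightarrow> real" where
    "set ws \<subseteq> space M" "distinct (map (\<lambda>w. restrict_val Bs (v w)) ws)"
    "\<And>i. 0 \<le> p i" "(\<Sum>i<length ws. p i) = 1"
    "\<And>\<alpha>. fbasics \<alpha> \<subseteq> Bs \<Longrightarrow>
       measure M (ext M v \<alpha>) = (\<Sum>i<length ws. if eval (v (ws ! i)) \<alpha> then p i else 0)"
proof -
  obtain ts where ts: "distinct ts" "set ts = vals_on M v Bs"
    using finite_distinct_list[OF finite_vals_on[OF Bs(1)]] by blast
  define ws where "ws = map (\<lambda>t. SOME w. w \<in> space M \<and> restrict_val Bs (v w) = t) ts"
  have ws: "ws ! i \<in> space M \<and> restrict_val Bs (v (ws ! i)) = ts ! i" if "i < length ts" for i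
  proof -
    have "ts ! i \<in> vals_on M v Bs" using that ts(2) nth_mem by blast
    then have "\<exists>w. w \<in> space M \<and> restrict_val Bs (v w) = ts ! i" by (auto simp: vals_on_def)
    from someI_ex[OF this] show ?thesis using that unfolding ws_def by simp
  qed
  define p where "p i = measure M (val_class M v Bs (ts ! i))" for i
  have reindex: "(\<Sum>i<length ts. g (ts ! i)) = (\<Sum>t\<in>vals_on M v Bs. g t)" for g
    using sum.reindex_bij_betw[OF bij_betw_nth[OF ts(1) refl ts(2)[symmetric]]] by simp
  show ?thesis
  proof (rule that)
    show "set ws \<subseteq> space M" using ws by (auto simp: ws_def in_set_conv_nth)
    have "map (\<lambda>w. restrict_val Bs (v w)) ws = ts" using ws by (simp add: ws_def list_eq_iff_nth_eq)
    then show "distinct (map (\<lambda>w. restrict_val Bs (v w)) ws)" using ts(1) by simp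
    show "0 \<le> p i" for i by (simp add: p_def)
    show "(\<Sum>i<length ws. p i) = 1"
      using sum_measure_val_class[OF PL Bs] reindex[of "\<lambda>t. measure M (val_class M v Bs t)"]
      by (simp add: p_def ws_def)
  next
    fix \<alpha> assume \<alpha>: "fbasics \<alpha> \<subseteq> Bs"
    have "eval (v (ws ! i)) \<alpha> = eval (ts ! i) \<alpha>" if "i < length ts" for i
      using ws[OF that] eval_restrict_val[OF \<alpha>] by metis
    then have "(\<Sum>i<length ws. if eval (v (ws ! i)) \<alpha> then p i else 0)
        = (\<Sum>i<length ts. if eval (ts ! i) \<alpha> then measure M (val_class M v Bs (ts ! i)) else 0)"
      by (intro sum.cong) (simp_all add: ws_def p_def)
    then show "measure M (ext M v \<alpha>) = (\<Sum>i<length ws. if eval (v (ws ! i)) \<alpha> then p i else 0)"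
      using measure_ext_eq_sum_val_class[OF PL Bs \<alpha>]
        reindex[of "\<lambda>t. if eval t \<alpha> then measure M (val_class M v Bs t) else 0"] by simp
  qed
qed

section \<open>Finite models from weights\<close>

definition weights_measure :: "nat \<Rightarrow> (nat \<Rightarrow> real) \<Rightarrow> nat measure" where
  "weights_measure n x = point_measure {i. i < n \<and> 0 < x i} (\<lambda>i. ennreal (x i))"

lemma space_weights_measure: "space (weights_measure n x) = {i. i < n \<and> 0 < x i}"
  by (simp add: weights_measure_def space_point_measure)

lemma sets_weights_measure: "sets (weights_measure n x) = Pow (space (weights_measure n x))"
  by (simp add: weights_measure_def space_point_measure sets_point_measure)

lemma measure_weights_measure:
  "X \<subseteq> space (weights_measure n x) \<Longrightarrow> measure (weights_measure n x) X = (\<Sum>i\<in>X. x i)"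
  unfolding weights_measure_def space_point_measure
  by (subst measure_point_measure_finite_if) auto

lemma sum_weights_support:
  fixes n :: nat and x f :: "nat \<Rightarrow> real"
  assumes "\<And>i. i < n \<Longrightarrow> 0 \<le> x i" "\<And>i. i < n \<Longrightarrow> x i = 0 \<Longrightarrow> f i = 0"
  shows "(\<Sum>i\<in>{i. i < n \<and> 0 < x i}. f i) = (\<Sum>i<n. f i)"
proof (rule sum.mono_neutral_left)
  show "\<forall>i\<in>{..<n} - {i. i < n \<and> 0 < x i}. f i = 0"
  proof
    fix i assume "i \<in> {..<n} - {i. i < n \<and> 0 < x i}"
    then have "i < n" "x i = 0" using assms(1)[of i] by auto
    then show "f i = 0" by (rule assms(2))
  qed
qed auto

lemma PL_model_weights_measure:
  assumes "\<And>i. i < n \<Longrightarrow> 0 \<le> x i" "(\<Sum>i<n. x i) = 1" "\<And>i. i < n \<Longrightarrow> u i \<in> Adm"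
  shows "PL_model Adm (weights_measure n x) u"
  unfolding PL_model_def
proof (intro conjI ballI allI)
  have "(\<Sum>i\<in>{i. i < n \<and> 0 < x i}. x i) = 1"
    using sum_weights_support[of n x x] assms(1,2) by simp
  then have "(\<Sum>i\<in>{i. i < n \<and> 0 < x i}. ennreal (x i)) = 1"
    by (subst sum_ennreal) auto
  then show "prob_space (weights_measure n x)"
    unfolding weights_measure_def by (intro prob_space_point_measure) auto
qed (use assms(3) in \<open>auto simp: space_weights_measure sets_weights_measure ext_def\<close>)

lemma measure_ext_weights_measure:
  assumes "\<And>i. i < n \<Longrightarrow> 0 \<le> x i"
  shows "measure (weights_measure n x) (ext (weights_measure n x) u \<alpha>)
    = (\<Sum>i<n. if eval (u i) \<alpha> then x i else 0)"
proof -
  let ?S = "{i. i < n \<and> 0 < x i}"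
  have "ext (weights_measure n x) u \<alpha> = {i \<in> ?S. eval (u i) \<alpha>}"
    by (auto simp: ext_def space_weights_measure)
  moreover have "{i \<in> ?S. eval (u i) \<alpha>} \<subseteq> space (weights_measure n x)"
    by (auto simp: space_weights_measure)
  ultimately have "measure (weights_measure n x) (ext (weights_measure n x) u \<alpha>)
      = (\<Sum>i\<in>{i \<in> ?S. eval (u i) \<alpha>}. x i)"
    using measure_weights_measure by metis
  also have "\<dots> = (\<Sum>i\<in>?S. if eval (u i) \<alpha> then x i else 0)"
    by (rule sum.inter_filter) simp
  also have "\<dots> = (\<Sum>i<n. if eval (u i) \<alpha> then x i else 0)"
    using assms by (intro sum_weights_support) auto
  finally show ?thesis .
qed

lemma sparse_rational_reweighting:
  fixes u :: "nat \<Rightarrow> 'b \<Rightarrow> bool" and p :: "nat \<Rightarrow> real" and A :: "'b pfml"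
  assumes p: "\<And>i. 0 \<le> p i" "(\<Sum>i<n. p i) = 1"
  obtains x where "\<And>i. i < n \<Longrightarrow> 0 \<le> x i" "(\<Sum>i<n. x i) = 1"
    "\<And>s \<alpha>. (s, \<alpha>) \<in> set (patoms A) \<Longrightarrow>
       real_of_rat s \<le> (\<Sum>i<n. if eval (u i) \<alpha> then x i else 0)
       \<longleftrightarrow> real_of_rat s \<le> (\<Sum>i<n. if eval (u i) \<alpha> then p i else 0)"
    "card {i. i < n \<and> 0 < x i} \<le> psize A"
    "\<And>i. i < n \<Longrightarrow> \<exists>q. x i = real_of_rat q \<and> 0 \<le> q \<and> real (ratsize q)
       \<le> 2 * (real (psize A) * real (maxratsize A) + real (psize A) * log 2 (real (psize A)) + 1)"
proof -
  define P where "P = patoms A"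
  define a where "a j i = (if eval (u i) (snd (P ! j)) then 1 else 0 :: real)" for j i
  interpret threshold_system n "length P" a "\<lambda>j. fst (P ! j)" p
    by unfold_locales (use p in \<open>auto simp: a_def\<close>)
  have "real_of_int (snd (quotient_of (fst (P ! j)))) \<le> 2 ^ maxratsize A" if "j < length P" for j
    using denominator_le_two_power_maxratsize[of "fst (P ! j)" "snd (P ! j)" A] nth_mem[OF that]
    by (simp add: P_def)
  then obtain x m D where x: "\<And>i. i < n \<Longrightarrow> 0 \<le> x i" "(\<Sum>i<n. x i) = 1"
    and truth: "\<And>j. j < length P \<Longrightarrow> real_of_rat (fst (P ! j)) \<le> (\<Sum>i<n. a j i * x i) \<longleftrightarrow> holds j"
    and m: "card {i. i < n \<and> 0 < x i} \<le> m" "1 \<le> m" "m \<le> Suc (length P)"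
    and D: "0 < D" "real_of_int D \<le> fact m * (2 ^ maxratsize A) ^ m"
      "\<And>i. i < n \<Longrightarrow> x i * of_int D \<in> \<int>"
    using sparse_rational_solution by blast
  have weighted: "(\<Sum>i<n. a j i * y i) = (\<Sum>i<n. if eval (u i) (snd (P ! j)) then y i else 0)" for j y
    by (intro sum.cong) (simp_all add: a_def)
  have "Suc (length P) \<le> psize A" using Suc_length_patoms_le by (simp add: P_def)
  show ?thesis
  proof (rule that)
    show "0 \<le> x i" if "i < n" for i using x(1) that .
    show "(\<Sum>i<n. x i) = 1" by (rule x(2))
    show "card {i. i < n \<and> 0 < x i} \<le> psize A" using m \<open>Suc (length P) \<le> psize A\<close> by linarith
  next
    fix s \<alpha> assume "(s, \<alpha>) \<in> set (patoms A)"
    then obtain j where "j < length P" "P ! j = (s, \<alpha>)" unfolding P_def by (metis in_set_conv_nth)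
    then show "real_of_rat s \<le> (\<Sum>i<n. if eval (u i) \<alpha> then x i else 0)
        \<longleftrightarrow> real_of_rat s \<le> (\<Sum>i<n. if eval (u i) \<alpha> then p i else 0)"
      using truth[of j] weighted[of j] by (simp add: holds_def)
  next
    fix i assume "i < n"
    have "x i \<le> (\<Sum>i<n. x i)" using \<open>i < n\<close> x(1) by (intro member_le_sum) auto
    then show "\<exists>q. x i = real_of_rat q \<and> 0 \<le> q \<and> real (ratsize q)
       \<le> 2 * (real (psize A) * real (maxratsize A) + real (psize A) * log 2 (real (psize A)) + 1)"
      using ratsize_of_common_denominator[OF x(1)[OF \<open>i < n\<close>] _ D(3)[OF \<open>i < n\<close>] D(1,2) m(2)]
        x(2) m(3) \<open>Suc (length P) \<le> psize A\<close> by simp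
  qed
qed

theorem mainTheorem2:
  fixes Adm :: "('b \<Rightarrow> bool) set"
    and A :: "'b pfml"
    and M :: "'w measure" and v :: "'w \<Rightarrow> 'b \<Rightarrow> bool"
  assumes "wf_pfml A"
    and "PL_model Adm M v" and "psat M v A"
  shows "\<exists>(M' :: nat measure) v'. PL_model Adm M' v' \<and> psat M' v' A
     \<and> finite (space M') \<and> card (space M') \<le> psize A
     \<and> sets M' = Pow (space M')
     \<and> (\<forall>w\<in>space M'. \<exists>q::rat. measure M' {w} = real_of_rat q \<and> 0 \<le> q
          \<and> real (ratsize q) \<le> 2 * (real (psize A) * real (maxratsize A)
                + real (psize A) * log 2 (real (psize A)) + 1))
     \<and> (\<forall>a\<in>cpnb A. \<forall>w1\<in>space M'. \<forall>w2\<in>space M'.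
          eval (v' w1) a \<and> eval (v' w2) a \<longrightarrow> w1 = w2)"
proof -
  obtain ws p where ws: "set ws \<subseteq> space M"
    and types: "distinct (map (\<lambda>w. restrict_val (pbasics A) (v w)) ws)"
    and p: "\<And>i. 0 \<le> p i" "(\<Sum>i<length ws. p i) = 1"
    and \<mu>: "\<And>\<alpha>. fbasics \<alpha> \<subseteq> pbasics A \<Longrightarrow>
      measure M (ext M v \<alpha>) = (\<Sum>i<length ws. if eval (v (ws ! i)) \<alpha> then p i else 0)"
    using world_decomposition[OF assms(2) finite_pbasics pbasics_nonempty] by blast
  define v' where "v' i = v (ws ! i)" for i
  obtain x where x: "\<And>i. i < length ws \<Longrightarrow> 0 \<le> x i" "(\<Sum>i<length ws. x i) = 1"
    and atoms: "\<And>s \<alpha>. (s, \<alpha>) \<in> set (patoms A) \<Longrightarrow>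
       real_of_rat s \<le> (\<Sum>i<length ws. if eval (v' i) \<alpha> then x i else 0)
       \<longleftrightarrow> real_of_rat s \<le> (\<Sum>i<length ws. if eval (v' i) \<alpha> then p i else 0)"
    and card: "card {i. i < length ws \<and> 0 < x i} \<le> psize A"
    and small: "\<And>i. i < length ws \<Longrightarrow> \<exists>q. x i = real_of_rat q \<and> 0 \<le> q \<and> real (ratsize q)
       \<le> 2 * (real (psize A) * real (maxratsize A) + real (psize A) * log 2 (real (psize A)) + 1)"
    using sparse_rational_reweighting[OF p, where u = v' and A = A] by blast
  let ?M' = "weights_measure (length ws) x"
  have "v' i \<in> Adm" if "i < length ws" for i
    using assms(2) ws nth_mem[OF that] by (auto simp: v'_def PL_model_def)
  then have "PL_model Adm ?M' v'"
    using x by (intro PL_model_weights_measure)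
  moreover have "real_of_rat s \<le> measure M (ext M v \<alpha>)
      \<longleftrightarrow> real_of_rat s \<le> measure ?M' (ext ?M' v' \<alpha>)" if "(s, \<alpha>) \<in> set (patoms A)" for s \<alpha>
    using atoms[OF that] \<mu>[OF fbasics_patoms[OF that]]
    by (simp add: measure_ext_weights_measure x(1) v'_def)
  then have "psat ?M' v' A" using assms(3) psat_cong_atoms by blast
  moreover have "w1 = w2"
    if "a \<in> cpnb A" "w1 \<in> space ?M'" "w2 \<in> space ?M'" "eval (v' w1) a" "eval (v' w2) a" for a w1 w2
    using cpnb_determines_restrict_val[OF that(1,4,5)] that(2,3) nth_eq_iff_index_eq[OF types, of w1 w2]
    by (simp add: space_weights_measure v'_def)
  ultimately show ?thesis
    using card small
    by (intro exI[of _ ?M'] exI[of _ v'])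
      (auto simp: space_weights_measure sets_weights_measure measure_weights_measure)
qed

end
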